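(* Let $R=R_0\oplus R_1\oplus\cdots\oplus R_{p-1}$ be a commutative $\mathbb Z/p\mathbb Z$-graded $F$-algebra and $I=\sum_{i+j=p}R_iR_j\subset R_0$ (sum over $1\le i,j\le p-1$). The following are equivalent: (1) $X^G=\emptyset$, where $X^G=\mathrm{Spec}(R_0/I)$; (2) $I=R_0$; (3) $R_i^p=R_0$ for all $i=1,\dots,p-1$; (4) $R_1^p=R_0$; (5) $R_iR_{p-i}=R_0$ for each $i=1,\dots,p-1$; (6) for all $k,l\in\{0,\dots,p-1\}$ the multiplication map $R_k\otimes_{R_0}R_l\to R_{k+l}$ (index mod $p$) is an isomorphism; (7) the homomorphism $\Phi:R\otimes_{R_0}R\to F[t]/(t^p-1)\otimes_F R$ given by $a_k\otimes b_l\mapsto t^k\otimes a_kb_l$ for $a_k\in R_k$, $b_l\in R_l$ is an isomorphism.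
   Context: $p$ is a prime and $F$ a field. A $\mathbb Z/p\mathbb Z$-grading of $R$ corresponds to an action of $G=\mu_p=\mathrm{Spec}\,F[t]/(t^p-1)$ on $X=\mathrm{Spec}\,R$, with coaction $r_0+\cdots+r_{p-1}\mapsto\sum_i t^i\otimes r_i$. $R_i^p$ denotes the additive subgroup of $R$ generated by products of $p$ elements of $R_i$ (it lies in $R_0$); $R_iR_j$ likewise denotes the additive span of products. *)

theory Defs
  imports "HOL-Computational_Algebra.Primes" "HOL-Algebra.QuotRing" "HOL-Library.Poly_Mapping"
begin

definition F_algebra :: "('f::field \<Rightarrow> 'r::comm_ring_1) \<Rightarrow> bool" where
  "F_algebra phi \<longleftrightarrow> phi 1 = 1 \<and> (\<forall>a b. phi (a + b) = phi a + phi b) \<and>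
     (\<forall>a b. phi (a * b) = phi a * phi b)"

definition zp_grading :: "nat \<Rightarrow> ('f::field \<Rightarrow> 'r::comm_ring_1) \<Rightarrow> (nat \<Rightarrow> 'r set) \<Rightarrow> bool" where
  "zp_grading p phi Rg \<longleftrightarrow>
     (\<forall>i<p. 0 \<in> Rg i \<and> (\<forall>x\<in>Rg i. \<forall>y\<in>Rg i. x + y \<in> Rg i) \<and>
            (\<forall>c. \<forall>x\<in>Rg i. phi c * x \<in> Rg i)) \<and>
     (\<forall>r. \<exists>!f. (\<forall>i<p. f i \<in> Rg i) \<and> (\<forall>i\<ge>p. f i = 0) \<and> r = (\<Sum>i<p. f i)) \<and>
     (\<forall>i<p. \<forall>j<p. \<forall>x\<in>Rg i. \<forall>y\<in>Rg j. x * y \<in> Rg ((i + j) mod p))"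

definition hcomp :: "nat \<Rightarrow> (nat \<Rightarrow> ('r::comm_ring_1) set) \<Rightarrow> 'r \<Rightarrow> nat \<Rightarrow> 'r" where
  "hcomp p Rg a = (THE f. (\<forall>i<p. f i \<in> Rg i) \<and> (\<forall>i\<ge>p. f i = 0) \<and> a = (\<Sum>i<p. f i))"

definition mul_span :: "('r::comm_ring_1) set \<Rightarrow> 'r set \<Rightarrow> 'r set" where
  "mul_span A B = {\<Sum>k<(n::nat). of_int (c k) * a k * b k | n c a b. \<forall>k<n. a k \<in> A \<and> b k \<in> B}"

definition pow_span :: "('r::comm_ring_1) set \<Rightarrow> nat \<Rightarrow> 'r set" where
  "pow_span A p = {\<Sum>k<(n::nat). of_int (c k) * (\<Prod>j<p. a k j) | n c a. \<forall>k<n. \<forall>j<p. a k j \<in> A}"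

definition fixed_ideal :: "nat \<Rightarrow> (nat \<Rightarrow> ('r::comm_ring_1) set) \<Rightarrow> 'r set" where
  "fixed_ideal p Rg = {\<Sum>i\<in>{1..p-1}. x i | x. \<forall>i\<in>{1..p-1}. x i \<in> mul_span (Rg i) (Rg (p - i))}"

definition sub_ring :: "('r::comm_ring_1) set \<Rightarrow> 'r ring" where
  "sub_ring S = \<lparr>carrier = S, monoid.mult = (*), one = 1, zero = 0, add = (+)\<rparr>"

definition Spec :: "('a, 'b) ring_scheme \<Rightarrow> 'a set set" where
  "Spec A = {P. primeideal P A}"

text \<open>Tensor products over a subring A of A-submodules M, N of R, constructed as the free
  abelian group on M \<times> N (finitely supported integer-valued functions) modulo the subgroup
  generated by the biadditivity and A-balancedness relations.\<close>
inductive_set tensor_rels :: "('r::comm_ring_1) set \<Rightarrow> 'r set \<Rightarrow> 'r set \<Rightarrow> ('r \<times> 'r \<Rightarrow>\<^sub>0 int) set"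
  for A M N where
  zero: "0 \<in> tensor_rels A M N"
| add: "x \<in> tensor_rels A M N \<Longrightarrow> y \<in> tensor_rels A M N \<Longrightarrow> x + y \<in> tensor_rels A M N"
| neg: "x \<in> tensor_rels A M N \<Longrightarrow> - x \<in> tensor_rels A M N"
| lin1: "a \<in> M \<Longrightarrow> a' \<in> M \<Longrightarrow> b \<in> N \<Longrightarrow>
     Poly_Mapping.single (a + a', b) 1 - Poly_Mapping.single (a, b) 1 - Poly_Mapping.single (a', b) 1
       \<in> tensor_rels A M N"
| lin2: "a \<in> M \<Longrightarrow> b \<in> N \<Longrightarrow> b' \<in> N \<Longrightarrow>
     Poly_Mapping.single (a, b + b') 1 - Poly_Mapping.single (a, b) 1 - Poly_Mapping.single (a, b') 1
       \<in> tensor_rels A M N"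
| bal: "r \<in> A \<Longrightarrow> a \<in> M \<Longrightarrow> b \<in> N \<Longrightarrow>
     Poly_Mapping.single (r * a, b) 1 - Poly_Mapping.single (a, r * b) 1 \<in> tensor_rels A M N"

text \<open>Formal sums supported on M \<times> N (representatives of elements of M \<otimes>_A N).\<close>
definition formal_sums :: "'r set \<Rightarrow> 'r set \<Rightarrow> ('r \<times> 'r \<Rightarrow>\<^sub>0 int) set" where
  "formal_sums M N = {x. Poly_Mapping.keys x \<subseteq> M \<times> N}"

text \<open>The map M \<otimes>_A N \<rightarrow> P, m \<otimes> n \<mapsto> m n, is an isomorphism (well defined, injective, onto P).\<close>
definition mult_map_iso :: "('r::comm_ring_1) set \<Rightarrow> 'r set \<Rightarrow> 'r set \<Rightarrow> 'r set \<Rightarrow> bool" where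
  "mult_map_iso A M N P \<longleftrightarrow>
     (let mu = (\<lambda>x. \<Sum>(a, b)\<in>Poly_Mapping.keys x. of_int (Poly_Mapping.lookup x (a, b)) * a * b) in
       mu ` formal_sums M N = P \<and>
       (\<forall>x\<in>formal_sums M N. mu x = 0 \<longleftrightarrow> x \<in> tensor_rels A M N))"

text \<open>The map Phi : R \<otimes>_{R_0} R \<rightarrow> F[t]/(t^p-1) \<otimes>_F R, where the target is identified with
  R^p via the F-basis 1, t, ..., t^(p-1) of F[t]/(t^p-1): an element \<Sum>_k t^k \<otimes> r_k is the
  coefficient vector (r_0, ..., r_(p-1)), represented as a function nat \<Rightarrow> 'r vanishing
  from p on.\<close>
definition Phi_map :: "nat \<Rightarrow> (nat \<Rightarrow> ('r::comm_ring_1) set) \<Rightarrow> ('r \<times> 'r \<Rightarrow>\<^sub>0 int) \<Rightarrow> nat \<Rightarrow> 'r" where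
  "Phi_map p Rg x = (\<lambda>k. if k < p then
      (\<Sum>(a, b)\<in>Poly_Mapping.keys x. of_int (Poly_Mapping.lookup x (a, b)) * hcomp p Rg a k * b) else 0)"

definition Phi_iso :: "nat \<Rightarrow> (nat \<Rightarrow> ('r::comm_ring_1) set) \<Rightarrow> bool" where
  "Phi_iso p Rg \<longleftrightarrow>
     Phi_map p Rg ` formal_sums UNIV UNIV = {f. \<forall>k\<ge>p. f k = 0} \<and>
     (\<forall>x\<in>formal_sums UNIV UNIV. Phi_map p Rg x = (\<lambda>_. 0) \<longleftrightarrow> x \<in> tensor_rels (Rg 0) UNIV UNIV)"

end

theory Submission
  imports Defs
begin

text \<open>
  A nonzero ring has a maximal, hence prime, ideal, so \<open>X\<^sup>G = Spec (R\<^sub>0/I)\<close> is empty iff \<open>I = R\<^sub>0\<close>.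
  If \<open>1 \<in> I\<close>, then \<open>1\<close> lies in the radical of the ideal \<open>R\<^sub>i\<^sup>p\<close> of \<open>R\<^sub>0\<close> for every \<open>i \<noteq> 0\<close>, because
  every generator \<open>x y\<close> of \<open>I\<close> has a power in \<open>R\<^sub>i\<^sup>p\<close>; hence \<open>R\<^sub>i\<^sup>p = R\<^sub>0\<close>.
  Conversely \<open>R\<^sub>1\<^sup>p \<subseteq> R\<^sub>i R\<^sub>p\<^sub>-\<^sub>i \<subseteq> I\<close>.
  A decomposition \<open>1 = \<Sum>\<^sub>t u\<^sub>t w\<^sub>t\<close> with \<open>u\<^sub>t \<in> R\<^sub>k\<close>, \<open>w\<^sub>t \<in> R\<^sub>-\<^sub>k\<close> makes \<open>z \<mapsto> \<Sum>\<^sub>t u\<^sub>t \<otimes> w\<^sub>t z\<close>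
  an inverse of the multiplication \<open>R\<^sub>k \<otimes> R\<^sub>l \<rightarrow> R\<^sub>k\<^sub>+\<^sub>l\<close>. Finally \<open>\<Phi>\<close> splits into these
  multiplication maps: the \<open>t\<^sup>k\<close>-coefficient of \<open>\<Phi>\<close>, restricted to \<open>R\<^sub>k \<otimes> R\<^sub>l\<close> and read in
  degree \<open>k + l\<close>, is the multiplication map.
\<close>

lemma sum_lessThan_concat:
  fixes f g :: "nat \<Rightarrow> 'a::comm_monoid_add"
  shows "(\<Sum>k<n + m. if k < n then f k else g (k - n)) = (\<Sum>k<n. f k) + (\<Sum>k<m. g k)"
  by (induction m) (simp_all add: add.assoc)

lemma prime_ex_mult_mod_eq:
  fixes p :: nat
  assumes p: "prime p" and j: "0 < j" "j < p"
  shows "\<exists>s. (s * j) mod p = i mod p"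
proof -
  have "coprime j p"
    using prime_imp_coprime[OF p, of j] nat_dvd_not_less[of j p] j by (simp add: coprime_commute)
  then obtain x y where xy: "j * x = p * y + 1" using bezout_nat[of j p] j by auto
  have "(i * x * j) mod p = (i * (p * y + 1)) mod p"
    by (metis xy mult.assoc mult.commute)
  also have "\<dots> = (i + p * (i * y)) mod p"
    by (simp add: algebra_simps)
  also have "\<dots> = i mod p"
    by simp
  finally show ?thesis by blast
qed

lemma mod_add_shifted_cancel:
  fixes k p :: nat
  assumes "k < p"
  shows "(k + (m + p - k) mod p) mod p = m mod p"
  using assms by (simp add: mod_add_right_eq)

lemma mod_shifted_add_cancel:
  fixes k p :: nat
  assumes "k < p"
  shows "((m + k) mod p + p - k) mod p = m mod p"
proof -
  have "((m + k) mod p + p - k) mod p = ((m + k) mod p + (p - k)) mod p"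
    using assms by simp
  also have "\<dots> = (m + k + (p - k)) mod p"
    by (simp add: mod_add_left_eq)
  also have "m + k + (p - k) = m + p"
    using assms by simp
  finally show ?thesis by simp
qed

definition int_span :: "'a::comm_ring_1 set \<Rightarrow> 'a set" where
  "int_span S = {\<Sum>k<(n::nat). of_int (c k) * s k | n c s. \<forall>k<n. s k \<in> S}"

lemma int_spanI: "(\<And>k. k < n \<Longrightarrow> s k \<in> S) \<Longrightarrow> (\<Sum>k<(n::nat). of_int (c k) * s k) \<in> int_span S"
  unfolding int_span_def by blast

lemma int_spanE:
  assumes "x \<in> int_span S"
  obtains n :: nat and c s where "x = (\<Sum>k<n. of_int (c k) * s k)" "\<And>k. k < n \<Longrightarrow> s k \<in> S"
  using assms unfolding int_span_def by blast

lemma int_span_zero: "0 \<in> int_span S"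
  using int_spanI[of 0] by simp

lemma int_span_base: "s \<in> S \<Longrightarrow> s \<in> int_span S"
  using int_spanI[of 1 "\<lambda>_. s" S "\<lambda>_. 1"] by simp

lemma int_span_add:
  assumes "x \<in> int_span S" "y \<in> int_span S"
  shows "x + y \<in> int_span S"
proof -
  obtain n :: nat and c s where x: "x = (\<Sum>k<n. of_int (c k) * s k)" "\<And>k. k < n \<Longrightarrow> s k \<in> S"
    using assms(1) by (blast elim: int_spanE)
  obtain m :: nat and d t where y: "y = (\<Sum>k<m. of_int (d k) * t k)" "\<And>k. k < m \<Longrightarrow> t k \<in> S"
    using assms(2) by (blast elim: int_spanE)
  have "x + y = (\<Sum>k<n + m. if k < n then of_int (c k) * s k else of_int (d (k - n)) * t (k - n))"
    using sum_lessThan_concat[where f="\<lambda>k. of_int (c k) * s k" and g="\<lambda>k. of_int (d k) * t k"]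
    by (simp add: x y)
  also have "\<dots> = (\<Sum>k<n + m. of_int (if k < n then c k else d (k - n)) * (if k < n then s k else t (k - n)))"
    by (intro sum.cong) auto
  finally show ?thesis
    using x(2) y(2) by (auto intro!: int_spanI)
qed

lemma int_span_of_int_mult: "x \<in> int_span S \<Longrightarrow> of_int a * x \<in> int_span S"
proof (elim int_spanE)
  fix n c s assume "x = (\<Sum>k<(n::nat). of_int (c k) * s k)" "\<And>k. k < n \<Longrightarrow> s k \<in> S"
  then show "of_int a * x \<in> int_span S"
    using int_spanI[of n s S "\<lambda>k. a * c k"] by (simp add: sum_distrib_left mult.assoc)
qed

lemma int_span_uminus: "x \<in> int_span S \<Longrightarrow> - x \<in> int_span S"
  using int_span_of_int_mult[of x S "- 1"] by simp

lemma int_span_diff: "x \<in> int_span S \<Longrightarrow> y \<in> int_span S \<Longrightarrow> x - y \<in> int_span S"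
  using int_span_add[OF _ int_span_uminus] by (metis diff_conv_add_uminus)

lemma int_span_sum: "(\<And>i. i \<in> I \<Longrightarrow> f i \<in> int_span S) \<Longrightarrow> sum f I \<in> int_span S"
  by (induction I rule: infinite_finite_induct) (auto simp: int_span_zero int_span_add)

lemma int_span_subset:
  assumes "0 \<in> T" "\<And>x y. x \<in> T \<Longrightarrow> y \<in> T \<Longrightarrow> x + y \<in> T" "\<And>c s. s \<in> S \<Longrightarrow> of_int c * s \<in> T"
  shows "int_span S \<subseteq> T"
proof
  fix x assume "x \<in> int_span S"
  then obtain n c s where x: "x = (\<Sum>k<(n::nat). of_int (c k) * s k)" "\<And>k. k < n \<Longrightarrow> s k \<in> S"
    by (blast elim: int_spanE)
  have "(\<Sum>k<m. of_int (c k) * s k) \<in> T" if "m \<le> n" for m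
    using that by (induction m) (auto simp: assms x(2))
  then show "x \<in> T" using x(1) by simp
qed

lemma int_span_mult:
  assumes "\<And>s. s \<in> S \<Longrightarrow> r * s \<in> int_span S" and "x \<in> int_span S"
  shows "r * x \<in> int_span S"
proof -
  have "int_span S \<subseteq> {x. r * x \<in> int_span S}"
    by (rule int_span_subset)
      (auto simp: int_span_zero distrib_left int_span_add mult.left_commute[of r] assms(1)
        intro: int_span_of_int_mult)
  then show ?thesis using assms(2) by blast
qed

lemma mul_span_eq_int_span: "mul_span A B = int_span {a * b | a b. a \<in> A \<and> b \<in> B}"
proof (intro equalityI subsetI)
  fix x assume "x \<in> mul_span A B"
  then obtain n c a b where "x = (\<Sum>k<(n::nat). of_int (c k) * a k * b k)" "\<forall>k<n. a k \<in> A \<and> b k \<in> B"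
    unfolding mul_span_def by blast
  then show "x \<in> int_span {a * b | a b. a \<in> A \<and> b \<in> B}"
    by (auto simp: mult.assoc intro!: int_spanI)
next
  fix x assume "x \<in> int_span {a * b | a b. a \<in> A \<and> b \<in> B}"
  then obtain n c s where x: "x = (\<Sum>k<(n::nat). of_int (c k) * s k)"
    and s: "\<And>k. k < n \<Longrightarrow> s k \<in> {a * b | a b. a \<in> A \<and> b \<in> B}"
    by (blast elim: int_spanE)
  obtain a b where ab: "\<And>k. k < n \<Longrightarrow> s k = a k * b k \<and> a k \<in> A \<and> b k \<in> B"
    using s by simp metis
  then have "x = (\<Sum>k<n. of_int (c k) * a k * b k)"
    unfolding x by (simp add: mult.assoc)
  then show "x \<in> mul_span A B"
    using ab unfolding mul_span_def by blast
qed

lemma pow_span_eq_int_span: "pow_span A q = int_span {\<Prod>j<q. a j | a. \<forall>j<q. a j \<in> A}"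
proof (intro equalityI subsetI)
  fix x assume "x \<in> pow_span A q"
  then obtain n c a where "x = (\<Sum>k<(n::nat). of_int (c k) * (\<Prod>j<q. a k j))" "\<forall>k<n. \<forall>j<q. a k j \<in> A"
    unfolding pow_span_def by blast
  then show "x \<in> int_span {\<Prod>j<q. a j | a. \<forall>j<q. a j \<in> A}"
    by (auto intro!: int_spanI)
next
  fix x assume "x \<in> int_span {\<Prod>j<q. a j | a. \<forall>j<q. a j \<in> A}"
  then obtain n c s where x: "x = (\<Sum>k<(n::nat). of_int (c k) * s k)"
    and s: "\<And>k. k < n \<Longrightarrow> s k \<in> {\<Prod>j<q. a j | a. \<forall>j<q. a j \<in> A}"
    by (blast elim: int_spanE)
  obtain a where a: "\<And>k. k < n \<Longrightarrow> s k = (\<Prod>j<q. a k j) \<and> (\<forall>j<q. a k j \<in> A)"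
    using s by simp metis
  then have "x = (\<Sum>k<n. of_int (c k) * (\<Prod>j<q. a k j))"
    unfolding x by simp
  then show "x \<in> pow_span A q"
    using a unfolding pow_span_def by blast
qed

section \<open>Formal sums and tensor relations\<close>

definition frag_eval :: "('k \<Rightarrow> 'a::comm_ring_1) \<Rightarrow> ('k \<Rightarrow>\<^sub>0 int) \<Rightarrow> 'a" where
  "frag_eval g x = (\<Sum>\<kappa>\<in>Poly_Mapping.keys x. of_int (Poly_Mapping.lookup x \<kappa>) * g \<kappa>)"

abbreviation frag_mult :: "('a \<times> 'a \<Rightarrow>\<^sub>0 int) \<Rightarrow> 'a::comm_ring_1" where
  "frag_mult \<equiv> frag_eval (\<lambda>(a, b). a * b)"

lemma frag_eval_superset:
  assumes "finite S" "Poly_Mapping.keys x \<subseteq> S"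
  shows "frag_eval g x = (\<Sum>\<kappa>\<in>S. of_int (Poly_Mapping.lookup x \<kappa>) * g \<kappa>)"
  unfolding frag_eval_def
  by (rule sum.mono_neutral_left) (use assms in \<open>auto simp: in_keys_iff\<close>)

lemma frag_eval_0 [simp]: "frag_eval g 0 = 0"
  by (simp add: frag_eval_def)

lemma frag_eval_single [simp]: "frag_eval g (Poly_Mapping.single \<kappa> n) = of_int n * g \<kappa>"
  by (simp add: frag_eval_def)

lemma frag_eval_add: "frag_eval g (x + y) = frag_eval g x + frag_eval g y"
proof -
  let ?S = "Poly_Mapping.keys x \<union> Poly_Mapping.keys y"
  have "frag_eval g (x + y) = (\<Sum>\<kappa>\<in>?S. of_int (Poly_Mapping.lookup (x + y) \<kappa>) * g \<kappa>)"
    using keys_add[of x y] by (intro frag_eval_superset) auto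
  also have "\<dots> = (\<Sum>\<kappa>\<in>?S. of_int (Poly_Mapping.lookup x \<kappa>) * g \<kappa>)
                  + (\<Sum>\<kappa>\<in>?S. of_int (Poly_Mapping.lookup y \<kappa>) * g \<kappa>)"
    by (simp add: lookup_add distrib_right sum.distrib)
  also have "\<dots> = frag_eval g x + frag_eval g y"
    by (subst (1 2) frag_eval_superset[of ?S]) auto
  finally show ?thesis .
qed

lemma frag_eval_uminus: "frag_eval g (- x) = - frag_eval g x"
  by (simp add: frag_eval_def sum_negf)

lemma frag_eval_diff: "frag_eval g (x - y) = frag_eval g x - frag_eval g y"
  using frag_eval_add[of g x "- y"] frag_eval_uminus[of g y] by simp

lemma frag_eval_sum: "frag_eval g (\<Sum>i\<in>I. f i) = (\<Sum>i\<in>I. frag_eval g (f i))"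
  by (induction I rule: infinite_finite_induct) (auto simp: frag_eval_add)

lemma mult_map_iso_iff:
  "mult_map_iso A M N P \<longleftrightarrow>
     frag_mult ` formal_sums M N = P \<and>
     (\<forall>x\<in>formal_sums M N. frag_mult x = 0 \<longleftrightarrow> x \<in> tensor_rels A M N)"
proof -
  have mult: "(\<lambda>x. \<Sum>(a, b)\<in>Poly_Mapping.keys x. of_int (Poly_Mapping.lookup x (a, b)) * a * b)
                = frag_mult"
    unfolding frag_eval_def by (intro ext sum.cong) (auto simp: mult.assoc)
  show ?thesis
    unfolding mult_map_iso_def Let_def mult ..
qed

lemma frag_mult_in_mul_span: "Poly_Mapping.keys x \<subseteq> A \<times> B \<Longrightarrow> frag_mult x \<in> mul_span A B"
proof (induction x rule: frag_induction)
  case (one x)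
  then show ?case
    by (cases x) (auto simp: mul_span_eq_int_span intro!: int_span_base)
next
  case (diff a b)
  then show ?case
    by (simp add: frag_eval_diff mul_span_eq_int_span int_span_diff)
qed (simp add: mul_span_eq_int_span int_span_zero)

lemma mult_map_iso_subset_mul_span: "mult_map_iso A M N P \<Longrightarrow> P \<subseteq> mul_span M N"
  unfolding mult_map_iso_iff formal_sums_def using frag_mult_in_mul_span by blast

lemma tensor_rels_diff: "x \<in> tensor_rels A M N \<Longrightarrow> y \<in> tensor_rels A M N \<Longrightarrow> x - y \<in> tensor_rels A M N"
  using tensor_rels.add[OF _ tensor_rels.neg] by (metis diff_conv_add_uminus)

lemma tensor_rels_trans:
  "x - y \<in> tensor_rels A M N \<Longrightarrow> y - z \<in> tensor_rels A M N \<Longrightarrow> x - z \<in> tensor_rels A M N"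
  using tensor_rels.add[of "x - y" A M N "y - z"] by simp

lemma tensor_rels_sum: "(\<And>i. i \<in> I \<Longrightarrow> f i \<in> tensor_rels A M N) \<Longrightarrow> sum f I \<in> tensor_rels A M N"
  by (induction I rule: infinite_finite_induct) (auto intro: tensor_rels.zero tensor_rels.add)

lemma tensor_rels_sum_diff:
  "(\<And>i. i \<in> I \<Longrightarrow> f i - g i \<in> tensor_rels A M N) \<Longrightarrow> sum f I - sum g I \<in> tensor_rels A M N"
  using tensor_rels_sum[of I "\<lambda>i. f i - g i" A M N] by (simp add: sum_subtractf)

lemma tensor_rels_mono:
  "x \<in> tensor_rels A M N \<Longrightarrow> M \<subseteq> M' \<Longrightarrow> N \<subseteq> N' \<Longrightarrow> x \<in> tensor_rels A M' N'"
  by (induction rule: tensor_rels.induct) (auto intro: tensor_rels.intros)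

lemma frag_eval_tensor_rels:
  assumes "x \<in> tensor_rels A M N"
    and "\<And>a a' b. a \<in> M \<Longrightarrow> a' \<in> M \<Longrightarrow> b \<in> N \<Longrightarrow> g (a + a', b) = g (a, b) + g (a', b)"
    and "\<And>a b b'. a \<in> M \<Longrightarrow> b \<in> N \<Longrightarrow> b' \<in> N \<Longrightarrow> g (a, b + b') = g (a, b) + g (a, b')"
    and "\<And>r a b. r \<in> A \<Longrightarrow> a \<in> M \<Longrightarrow> b \<in> N \<Longrightarrow> g (r * a, b) = g (a, r * b)"
  shows "frag_eval g x = 0"
  using assms(1)
  by (induction rule: tensor_rels.induct) (simp_all add: frag_eval_add frag_eval_uminus frag_eval_diff assms(2-4))

lemma frag_mult_tensor_rels: "x \<in> tensor_rels A M N \<Longrightarrow> frag_mult x = 0"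
  by (rule frag_eval_tensor_rels) (simp_all add: algebra_simps)

lemma frag_extend_tensor_rels:
  assumes "x \<in> tensor_rels A M N"
    and "\<And>a a' b. a \<in> M \<Longrightarrow> a' \<in> M \<Longrightarrow> b \<in> N \<Longrightarrow>
           G (a + a', b) - G (a, b) - G (a', b) \<in> tensor_rels A' M' N'"
    and "\<And>a b b'. a \<in> M \<Longrightarrow> b \<in> N \<Longrightarrow> b' \<in> N \<Longrightarrow>
           G (a, b + b') - G (a, b) - G (a, b') \<in> tensor_rels A' M' N'"
    and "\<And>r a b. r \<in> A \<Longrightarrow> a \<in> M \<Longrightarrow> b \<in> N \<Longrightarrow> G (r * a, b) - G (a, r * b) \<in> tensor_rels A' M' N'"
  shows "frag_extend G x \<in> tensor_rels A' M' N'"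
  using assms(1)
  by (induction rule: tensor_rels.induct)
    (simp_all add: frag_extend_add frag_extend_minus frag_extend_diff assms(2-4) tensor_rels.intros)

lemma frag_of_zero_left_tensor_rels: "0 \<in> M \<Longrightarrow> b \<in> N \<Longrightarrow> frag_of (0, b) \<in> tensor_rels A M N"
  using tensor_rels.neg[OF tensor_rels.lin1[of 0 M 0 b N A]] by simp

lemma frag_of_zero_right_tensor_rels: "a \<in> M \<Longrightarrow> 0 \<in> N \<Longrightarrow> frag_of (a, 0) \<in> tensor_rels A M N"
  using tensor_rels.neg[OF tensor_rels.lin2[of a M 0 N 0 A]] by simp

lemma frag_of_sum_left_tensor_rels:
  assumes "0 \<in> M" "\<And>x y. x \<in> M \<Longrightarrow> y \<in> M \<Longrightarrow> x + y \<in> M" "\<And>t. t < (n::nat) \<Longrightarrow> a t \<in> M" "b \<in> N"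
  shows "frag_of (\<Sum>t<n. a t, b) - (\<Sum>t<n. frag_of (a t, b)) \<in> tensor_rels A M N"
  using assms(3)
proof (induction n)
  case 0
  then show ?case using frag_of_zero_left_tensor_rels[OF assms(1,4)] by simp
next
  case (Suc n)
  have "(\<Sum>t<n. a t) \<in> M"
    using Suc.prems by (induction n) (auto intro: assms(1,2))
  then have "frag_of ((\<Sum>t<n. a t) + a n, b) - frag_of (\<Sum>t<n. a t, b) - frag_of (a n, b)
               \<in> tensor_rels A M N"
    using Suc.prems assms(4) by (intro tensor_rels.lin1) auto
  from tensor_rels.add[OF this Suc.IH] Suc.prems show ?case
    by (simp add: algebra_simps)
qed

lemma frag_of_sum_right_tensor_rels:
  assumes "0 \<in> N" "\<And>x y. x \<in> N \<Longrightarrow> y \<in> N \<Longrightarrow> x + y \<in> N" "\<And>t. t < (n::nat) \<Longrightarrow> b t \<in> N" "a \<in> M"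
  shows "frag_of (a, \<Sum>t<n. b t) - (\<Sum>t<n. frag_of (a, b t)) \<in> tensor_rels A M N"
  using assms(3)
proof (induction n)
  case 0
  then show ?case using frag_of_zero_right_tensor_rels[OF assms(4,1)] by simp
next
  case (Suc n)
  have "(\<Sum>t<n. b t) \<in> N"
    using Suc.prems by (induction n) (auto intro: assms(1,2))
  then have "frag_of (a, (\<Sum>t<n. b t) + b n) - frag_of (a, \<Sum>t<n. b t) - frag_of (a, b n)
               \<in> tensor_rels A M N"
    using Suc.prems assms(4) by (intro tensor_rels.lin2) auto
  from tensor_rels.add[OF this Suc.IH] Suc.prems show ?case
    by (simp add: algebra_simps)
qed

section \<open>Existence of prime ideals\<close>

lemma (in ring) ideal_Union_chain:
  assumes "C \<noteq> {}" and ideals: "\<And>J. J \<in> C \<Longrightarrow> ideal J R"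
    and chain: "\<And>J K. J \<in> C \<Longrightarrow> K \<in> C \<Longrightarrow> J \<subseteq> K \<or> K \<subseteq> J"
  shows "ideal (\<Union>C) R"
proof (rule idealI[OF ring_axioms])
  note subgroup = ideal.axioms(1)[OF ideals]
  show "subgroup (\<Union>C) (add_monoid R)"
  proof (rule add.subgroupI)
    show "\<Union>C \<subseteq> carrier R"
      using additive_subgroup.a_subset[OF subgroup] by blast
    show "\<Union>C \<noteq> {}"
      using assms(1) additive_subgroup.zero_closed[OF subgroup] by blast
  next
    fix a assume "a \<in> \<Union>C"
    then obtain J where "J \<in> C" "a \<in> J" by blast
    then show "\<ominus> a \<in> \<Union>C"
      using additive_subgroup.a_inv_closed[OF subgroup] by (auto simp: a_inv_def)
  next
    fix a b assume "a \<in> \<Union>C" "b \<in> \<Union>C"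
    then obtain J K where J: "J \<in> C" "a \<in> J" and K: "K \<in> C" "b \<in> K" by blast
    have "a \<oplus> b \<in> L" if "L \<in> C" "J \<subseteq> L" "K \<subseteq> L" for L
      using J K that additive_subgroup.a_closed[OF subgroup[OF \<open>L \<in> C\<close>]] by blast
    then show "a \<oplus> b \<in> \<Union>C"
      using chain[OF J(1) K(1)] J(1) K(1) by blast
  qed
next
  fix a x assume "a \<in> \<Union>C" "x \<in> carrier R"
  then obtain J where "J \<in> C" "a \<in> J" by blast
  then show "x \<otimes> a \<in> \<Union>C" "a \<otimes> x \<in> \<Union>C"
    using ideal.I_l_closed[OF ideals] ideal.I_r_closed[OF ideals] \<open>x \<in> carrier R\<close> by blast+
qed

lemma (in cring) exists_maximalideal:
  assumes "\<one> \<noteq> \<zero>"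
  obtains M where "maximalideal M R"
proof -
  let ?S = "{J. ideal J R \<and> \<one> \<notin> J}"
  have "\<exists>M\<in>?S. \<forall>X\<in>?S. M \<subseteq> X \<longrightarrow> X = M"
  proof (rule subset_Zorn_nonempty)
    show "?S \<noteq> {}" using zeroideal assms by blast
  next
    fix C assume "C \<noteq> {}" "subset.chain ?S C"
    then show "\<Union>C \<in> ?S"
      using ideal_Union_chain[of C] unfolding pred_on.chain_def by auto
  qed
  then obtain M where M: "ideal M R" "\<one> \<notin> M" and max: "\<And>X. X \<in> ?S \<Longrightarrow> M \<subseteq> X \<Longrightarrow> X = M"
    by blast
  have "maximalideal M R"
  proof (rule maximalidealI[OF M(1)])
    show "carrier R \<noteq> M" using M(2) by auto
    fix J assume "ideal J R" "M \<subseteq> J" "J \<subseteq> carrier R"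
    then show "J = M \<or> J = carrier R"
      using max[of J] ideal.one_imp_carrier by blast
  qed
  then show thesis by (rule that)
qed

lemma (in cring) Spec_eq_empty_iff: "Spec R = {} \<longleftrightarrow> \<one> = \<zero>"
proof
  assume empty: "Spec R = {}"
  show "\<one> = \<zero>"
  proof (rule ccontr)
    assume "\<one> \<noteq> \<zero>"
    then obtain M where "maximalideal M R" by (rule exists_maximalideal)
    then have "M \<in> Spec R" unfolding Spec_def by (simp add: maximalideal_prime)
    with empty show False by simp
  qed
next
  assume one: "\<one> = \<zero>"
  show "Spec R = {}"
  proof (rule ccontr)
    assume "Spec R \<noteq> {}"
    then obtain P where "primeideal P R" unfolding Spec_def by blast
    then interpret P: primeideal P R .
    have "\<one> \<in> P" using one P.zero_closed by simp
    then show False using P.one_imp_carrier P.I_notcarr by simp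
  qed
qed

lemma (in ideal) Spec_Quot_eq_empty_iff:
  assumes "cring R"
  shows "Spec (R Quot I) = {} \<longleftrightarrow> I = carrier R"
proof -
  have "Spec (R Quot I) = {} \<longleftrightarrow> I +> \<one> = I"
    using cring.Spec_eq_empty_iff[OF quotient_is_cring[OF assms]] by (simp add: FactRing_def)
  also have "\<dots> \<longleftrightarrow> \<one> \<in> I"
    using a_rcos_const a_rcos_self[OF one_closed] by blast
  also have "\<dots> \<longleftrightarrow> I = carrier R"
    using one_imp_carrier by blast
  finally show ?thesis .
qed

section \<open>Graded algebras\<close>

locale zp_graded_algebra =
  fixes p :: nat and phi :: "'f::field \<Rightarrow> 'r::comm_ring_1" and Rg :: "nat \<Rightarrow> 'r set"
  assumes prime: "prime p" and F_algebra: "F_algebra phi" and grading: "zp_grading p phi Rg"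
begin

abbreviation hc :: "'r \<Rightarrow> nat \<Rightarrow> 'r" where
  "hc \<equiv> hcomp p Rg"

abbreviation R0 :: "'r ring" where
  "R0 \<equiv> sub_ring (Rg 0)"

lemma p_gt_1: "1 < p"
  using prime prime_gt_1_nat by blast

lemma p_pos: "0 < p"
  using p_gt_1 by simp

lemma Rg_zero: "i < p \<Longrightarrow> 0 \<in> Rg i"
  and Rg_add: "i < p \<Longrightarrow> x \<in> Rg i \<Longrightarrow> y \<in> Rg i \<Longrightarrow> x + y \<in> Rg i"
  and Rg_smult: "i < p \<Longrightarrow> x \<in> Rg i \<Longrightarrow> phi c * x \<in> Rg i"
  and Rg_mult: "i < p \<Longrightarrow> j < p \<Longrightarrow> x \<in> Rg i \<Longrightarrow> y \<in> Rg j \<Longrightarrow> x * y \<in> Rg ((i + j) mod p)"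
  using grading unfolding zp_grading_def by simp_all

lemma ex1_decomposition: "\<exists>!f. (\<forall>i<p. f i \<in> Rg i) \<and> (\<forall>i\<ge>p. f i = 0) \<and> r = (\<Sum>i<p. f i)"
  using grading unfolding zp_grading_def by (elim conjE allE)

lemma phi_minus_one: "phi (- 1) = - 1"
proof -
  have add: "phi (a + b) = phi a + phi b" for a b
    using F_algebra unfolding F_algebra_def by blast
  have "phi 0 = 0"
    using add[of 0 0] by simp
  then have "phi (- 1) + phi 1 = 0"
    using add[of "- 1" 1] by simp
  moreover have "phi 1 = 1"
    using F_algebra unfolding F_algebra_def by blast
  ultimately show ?thesis
    by (simp add: eq_neg_iff_add_eq_0)
qed

lemma Rg_uminus: "i < p \<Longrightarrow> x \<in> Rg i \<Longrightarrow> - x \<in> Rg i"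
  using Rg_smult[of i x "- 1"] by (simp add: phi_minus_one)

lemma Rg_diff: "i < p \<Longrightarrow> x \<in> Rg i \<Longrightarrow> y \<in> Rg i \<Longrightarrow> x - y \<in> Rg i"
  using Rg_add[OF _ _ Rg_uminus] by (metis diff_conv_add_uminus)

lemma Rg_sum: "i < p \<Longrightarrow> (\<And>k. k \<in> S \<Longrightarrow> f k \<in> Rg i) \<Longrightarrow> sum f S \<in> Rg i"
  by (induction S rule: infinite_finite_induct) (simp_all add: Rg_zero Rg_add)

lemma Rg_of_nat_mult: "i < p \<Longrightarrow> x \<in> Rg i \<Longrightarrow> of_nat n * x \<in> Rg i"
  by (induction n) (simp_all add: algebra_simps Rg_zero Rg_add)

lemma Rg_of_int_mult: "i < p \<Longrightarrow> x \<in> Rg i \<Longrightarrow> of_int c * x \<in> Rg i"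
  by (cases c) (simp_all add: Rg_of_nat_mult Rg_uminus del: of_nat_Suc)

lemma hcomp_spec: "(\<forall>i<p. hc a i \<in> Rg i) \<and> (\<forall>i\<ge>p. hc a i = 0) \<and> a = (\<Sum>i<p. hc a i)"
  unfolding hcomp_def using theI'[OF ex1_decomposition[of a]] .

lemma hcomp_in_Rg: "i < p \<Longrightarrow> hc a i \<in> Rg i"
  and hcomp_ge: "p \<le> i \<Longrightarrow> hc a i = 0"
  and sum_hcomp: "(\<Sum>i<p. hc a i) = a"
  using hcomp_spec[of a] by auto

lemma hcomp_eqI:
  assumes "\<forall>i<p. f i \<in> Rg i" "\<forall>i\<ge>p. f i = 0" "a = (\<Sum>i<p. f i)"
  shows "hc a = f"
proof -
  obtain g where unique: "\<And>h. (\<forall>i<p. h i \<in> Rg i) \<and> (\<forall>i\<ge>p. h i = 0) \<and> a = (\<Sum>i<p. h i) \<Longrightarrow> h = g"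
    using ex1_decomposition[of a] by (elim ex1E) auto
  have "hc a = g" using unique hcomp_spec by blast
  moreover have "f = g" using unique assms by blast
  ultimately show ?thesis by simp
qed

lemma hcomp_homog: "k < p \<Longrightarrow> a \<in> Rg k \<Longrightarrow> hc a = (\<lambda>i. if i = k then a else 0)"
  by (rule hcomp_eqI) (auto intro: Rg_zero)

lemma hcomp_0: "hc 0 = (\<lambda>i. 0)"
  by (rule hcomp_eqI) (auto intro: Rg_zero)

lemma hcomp_add: "hc (a + b) = (\<lambda>i. hc a i + hc b i)"
  by (rule hcomp_eqI) (auto simp: hcomp_in_Rg hcomp_ge Rg_add sum.distrib sum_hcomp)

lemma hcomp_diff: "hc (a - b) = (\<lambda>i. hc a i - hc b i)"
  by (rule hcomp_eqI) (auto simp: hcomp_in_Rg hcomp_ge Rg_diff sum_subtractf sum_hcomp)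

lemma hcomp_homog_mult:
  assumes k: "k < p" and a: "a \<in> Rg k"
  shows "hc (a * b) = (\<lambda>i. if i < p then a * hc b ((i + p - k) mod p) else 0)"
proof (rule hcomp_eqI)
  show "\<forall>i<p. (if i < p then a * hc b ((i + p - k) mod p) else 0) \<in> Rg i"
  proof (intro allI impI)
    fix i assume "i < p"
    have "a * hc b ((i + p - k) mod p) \<in> Rg ((k + (i + p - k) mod p) mod p)"
      using p_pos by (intro Rg_mult[OF k _ a hcomp_in_Rg]) auto
    then show "(if i < p then a * hc b ((i + p - k) mod p) else 0) \<in> Rg i"
      using mod_add_shifted_cancel[OF k, of i] \<open>i < p\<close> by simp
  qed
  have "a * b = (\<Sum>i<p. a * hc b i)"
    by (simp add: sum_hcomp flip: sum_distrib_left)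
  also have "\<dots> = (\<Sum>i<p. a * hc b ((i + p - k) mod p))"
  proof (rule sum.reindex_bij_witness[where i="\<lambda>i. (i + p - k) mod p" and j="\<lambda>i. (i + k) mod p"])
    fix i assume "i \<in> {..<p}"
    then show "((i + p - k) mod p + k) mod p = i" "((i + k) mod p + p - k) mod p = i"
      using mod_add_shifted_cancel[OF k, of i] mod_shifted_add_cancel[OF k, of i]
      by (simp_all add: add.commute)
    then show "a * hc b (((i + k) mod p + p - k) mod p) = a * hc b i"
      by simp
  qed (use p_pos in auto)
  finally show "a * b = (\<Sum>i<p. if i < p then a * hc b ((i + p - k) mod p) else 0)"
    by simp
qed simp

lemma one_in_Rg0: "1 \<in> Rg 0"
proof -
  have unit: "x * hc 1 0 = x" if "j < p" "x \<in> Rg j" for j x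
    using fun_cong[OF hcomp_homog_mult[OF that, of 1], of j] hcomp_homog[OF that] that
    by (simp add: mult.commute)
  have "hc 1 0 = (\<Sum>i<p. hc 1 i * hc 1 0)"
    by (simp add: sum_hcomp flip: sum_distrib_right)
  also have "\<dots> = 1"
    using unit[OF _ hcomp_in_Rg] by (simp add: sum_hcomp)
  finally show ?thesis
    using hcomp_in_Rg[OF p_pos, of 1] by simp
qed

lemma Rg0_mult: "r \<in> Rg 0 \<Longrightarrow> i < p \<Longrightarrow> x \<in> Rg i \<Longrightarrow> r * x \<in> Rg i"
  using Rg_mult[of 0 i r x] p_pos by simp

lemma hcomp_Rg0_mult: "r \<in> Rg 0 \<Longrightarrow> i < p \<Longrightarrow> hc (r * a) i = r * hc a i"
  using hcomp_homog_mult[of 0 r a] p_pos by simp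

lemma Rg_power: "j < p \<Longrightarrow> x \<in> Rg j \<Longrightarrow> x ^ n \<in> Rg ((n * j) mod p)"
proof (induction n)
  case (Suc n)
  then have "x * x ^ n \<in> Rg ((j + (n * j) mod p) mod p)"
    using p_pos by (intro Rg_mult) auto
  then show ?case by (simp add: mod_add_right_eq)
qed (simp add: one_in_Rg0)

lemma Rg_prod:
  assumes "i < p" "finite S" "\<And>j. j \<in> S \<Longrightarrow> a j \<in> Rg i"
  shows "(\<Prod>j\<in>S. a j) \<in> Rg ((card S * i) mod p)"
  using assms(2,3)
proof (induction S rule: finite_induct)
  case (insert x S)
  then have "a x * prod a S \<in> Rg ((i + (card S * i) mod p) mod p)"
    using p_pos assms(1) by (intro Rg_mult) auto
  then show ?case
    using insert by (simp add: mod_add_right_eq)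
qed (simp add: one_in_Rg0)

lemma Rg0_mult_closed: "r \<in> Rg 0 \<Longrightarrow> s \<in> Rg 0 \<Longrightarrow> r * s \<in> Rg 0"
  using Rg0_mult p_pos by blast

lemma Rg0_of_int: "of_int c \<in> Rg 0"
  using Rg_of_int_mult[OF p_pos one_in_Rg0, of c] by simp

lemma Rg0_of_nat: "of_nat n \<in> Rg 0"
  using Rg0_of_int[of "int n"] by simp

lemma Rg0_power: "z \<in> Rg 0 \<Longrightarrow> z ^ n \<in> Rg 0"
  using Rg_power[OF p_pos, of z n] by simp

lemma R0_carrier_simps [simp]:
  "carrier R0 = Rg 0" "mult R0 = (*)" "one R0 = 1" "zero R0 = 0" "add R0 = (+)"
  by (simp_all add: sub_ring_def)

lemma cring_R0: "cring R0"
proof (rule cringI)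
  show "abelian_group R0"
  proof (rule abelian_groupI)
    fix x assume "x \<in> carrier R0"
    then show "\<exists>y\<in>carrier R0. y \<oplus>\<^bsub>R0\<^esub> x = \<zero>\<^bsub>R0\<^esub>"
      using Rg_uminus[OF p_pos] by (intro bexI[of _ "- x"]) auto
  qed (auto simp: Rg_add Rg_zero p_pos ac_simps)
  show "comm_monoid R0"
    by (rule comm_monoidI) (auto simp: Rg0_mult_closed one_in_Rg0 ac_simps)
qed (simp add: distrib_right)

lemma mul_span_subset_Rg: "i < p \<Longrightarrow> j < p \<Longrightarrow> mul_span (Rg i) (Rg j) \<subseteq> Rg ((i + j) mod p)"
  unfolding mul_span_eq_int_span
  by (rule int_span_subset) (use p_pos in \<open>auto intro: Rg_zero Rg_add Rg_mult Rg_of_int_mult\<close>)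

lemma mul_span_complement_subset_Rg0:
  assumes "i \<in> {1..p-1}"
  shows "mul_span (Rg i) (Rg (p - i)) \<subseteq> Rg 0"
proof -
  have "i < p" "p - i < p" "(i + (p - i)) mod p = 0"
    using assms p_gt_1 by auto
  then show ?thesis
    using mul_span_subset_Rg by metis
qed

lemma pow_span_subset_Rg0: "i < p \<Longrightarrow> pow_span (Rg i) p \<subseteq> Rg 0"
  unfolding pow_span_eq_int_span
proof (rule int_span_subset)
  fix c s assume "i < p" "s \<in> {\<Prod>j<p. a j | a. \<forall>j<p. a j \<in> Rg i}"
  then obtain a where s: "s = (\<Prod>j<p. a j)" and a: "\<forall>j<p. a j \<in> Rg i"
    by blast
  have "s \<in> Rg ((card {..<p} * i) mod p)"
    unfolding s by (rule Rg_prod) (use a \<open>i < p\<close> in auto)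
  then show "of_int c * s \<in> Rg 0"
    using Rg_of_int_mult[OF p_pos] by simp
qed (use p_pos in \<open>auto intro: Rg_zero Rg_add\<close>)

lemma mul_span_Rg0_mult:
  assumes r: "r \<in> Rg 0" and i: "i < p" and x: "x \<in> mul_span (Rg i) B"
  shows "r * x \<in> mul_span (Rg i) B"
  using x unfolding mul_span_eq_int_span
proof (rule int_span_mult[rotated])
  fix s assume "s \<in> {a * b | a b. a \<in> Rg i \<and> b \<in> B}"
  then obtain a b where "r * s = (r * a) * b" "a \<in> Rg i" "b \<in> B"
    by (auto simp: mult.assoc)
  then show "r * s \<in> int_span {a * b | a b. a \<in> Rg i \<and> b \<in> B}"
    using Rg0_mult[OF r i] by (blast intro: int_span_base)
qed

lemma pow_span_Rg0_mult:
  assumes r: "r \<in> Rg 0" and i: "i < p" and x: "x \<in> pow_span (Rg i) p"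
  shows "r * x \<in> pow_span (Rg i) p"
  using x unfolding pow_span_eq_int_span
proof (rule int_span_mult[rotated])
  fix s assume "s \<in> {\<Prod>j<p. a j | a. \<forall>j<p. a j \<in> Rg i}"
  then obtain a where s: "s = (\<Prod>j<p. a j)" and a: "\<forall>j<p. a j \<in> Rg i"
    by blast
  obtain q where q: "p = Suc q"
    using p_pos by (cases p) auto
  have "r * s = (\<Prod>j<p. if j = 0 then r * a j else a j)"
    unfolding s q prod.lessThan_Suc_shift by simp
  moreover have "\<forall>j<p. (if j = 0 then r * a j else a j) \<in> Rg i"
    using a Rg0_mult[OF r i] by simp
  ultimately show "r * s \<in> int_span {\<Prod>j<p. a j | a. \<forall>j<p. a j \<in> Rg i}"
    by (blast intro: int_span_base)
qed

lemma pow_span_Rg1_subset_mul_span: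
  assumes i: "i \<in> {1..p-1}"
  shows "pow_span (Rg 1) p \<subseteq> mul_span (Rg i) (Rg (p - i))"
  unfolding pow_span_eq_int_span mul_span_eq_int_span
proof (rule int_span_subset)
  fix c s assume "s \<in> {\<Prod>j<p. a j | a. \<forall>j<p. a j \<in> Rg 1}"
  then obtain a where s: "s = (\<Prod>j<p. a j)" and a: "\<forall>j<p. a j \<in> Rg 1"
    by blast
  have "i < p" "(p - i) mod p = p - i"
    using i p_gt_1 by auto
  have "s = (\<Prod>j<i. a j) * (\<Prod>j\<in>{i..<p}. a j)"
    using prod.atLeastLessThan_concat[of 0 i p a] \<open>i < p\<close> by (simp add: s atLeast0LessThan)
  moreover have "(\<Prod>j<i. a j) \<in> Rg i"
    using Rg_prod[of 1 "{..<i}" a] a \<open>i < p\<close> p_gt_1 by simp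
  moreover have "(\<Prod>j\<in>{i..<p}. a j) \<in> Rg (p - i)"
    using Rg_prod[of 1 "{i..<p}" a] a \<open>(p - i) mod p = p - i\<close> p_gt_1 by simp
  ultimately show "of_int c * s \<in> int_span {a * b | a b. a \<in> Rg i \<and> b \<in> Rg (p - i)}"
    by (blast intro: int_span_of_int_mult int_span_base)
qed (auto intro: int_span_zero int_span_add)

lemma fixed_idealI:
  "(\<And>i. i \<in> {1..p-1} \<Longrightarrow> x i \<in> mul_span (Rg i) (Rg (p - i))) \<Longrightarrow>
     (\<Sum>i\<in>{1..p-1}. x i) \<in> fixed_ideal p Rg"
  unfolding fixed_ideal_def by blast

lemma fixed_idealE:
  assumes "y \<in> fixed_ideal p Rg"
  obtains x where "y = (\<Sum>i\<in>{1..p-1}. x i)" "\<And>i. i \<in> {1..p-1} \<Longrightarrow> x i \<in> mul_span (Rg i) (Rg (p - i))"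
  using assms unfolding fixed_ideal_def by blast

lemma fixed_ideal_zero: "0 \<in> fixed_ideal p Rg"
  using fixed_idealI[of "\<lambda>_. 0"] by (simp add: mul_span_eq_int_span int_span_zero)

lemma fixed_ideal_subset_Rg0: "fixed_ideal p Rg \<subseteq> Rg 0"
  using mul_span_complement_subset_Rg0 by (blast elim: fixed_idealE intro: Rg_sum[OF p_pos])

lemma mul_span_subset_fixed_ideal:
  assumes "i \<in> {1..p-1}"
  shows "mul_span (Rg i) (Rg (p - i)) \<subseteq> fixed_ideal p Rg"
proof
  fix y assume "y \<in> mul_span (Rg i) (Rg (p - i))"
  then have "(\<Sum>j\<in>{1..p-1}. if j = i then y else 0) \<in> fixed_ideal p Rg"
    by (intro fixed_idealI) (simp add: mul_span_eq_int_span int_span_zero)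
  then show "y \<in> fixed_ideal p Rg"
    using assms by simp
qed

lemma fixed_ideal_add:
  assumes "x \<in> fixed_ideal p Rg" "y \<in> fixed_ideal p Rg"
  shows "x + y \<in> fixed_ideal p Rg"
proof -
  obtain f where "x = (\<Sum>i\<in>{1..p-1}. f i)" "\<And>i. i \<in> {1..p-1} \<Longrightarrow> f i \<in> mul_span (Rg i) (Rg (p - i))"
    using assms(1) by (blast elim: fixed_idealE)
  moreover obtain g where "y = (\<Sum>i\<in>{1..p-1}. g i)" "\<And>i. i \<in> {1..p-1} \<Longrightarrow> g i \<in> mul_span (Rg i) (Rg (p - i))"
    using assms(2) by (blast elim: fixed_idealE)
  ultimately show ?thesis
    using fixed_idealI[of "\<lambda>i. f i + g i"] by (simp add: sum.distrib mul_span_eq_int_span int_span_add)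
qed

lemma fixed_ideal_Rg0_mult:
  assumes "x \<in> fixed_ideal p Rg" "r \<in> Rg 0"
  shows "r * x \<in> fixed_ideal p Rg"
proof -
  obtain f where "x = (\<Sum>i\<in>{1..p-1}. f i)" "\<And>i. i \<in> {1..p-1} \<Longrightarrow> f i \<in> mul_span (Rg i) (Rg (p - i))"
    using assms(1) by (blast elim: fixed_idealE)
  moreover have "i \<in> {1..p-1} \<Longrightarrow> i < p" for i
    using p_gt_1 by auto
  ultimately show ?thesis
    using fixed_idealI[of "\<lambda>i. r * f i"] mul_span_Rg0_mult[OF assms(2)] by (simp add: sum_distrib_left)
qed

lemma fixed_ideal_uminus: "x \<in> fixed_ideal p Rg \<Longrightarrow> - x \<in> fixed_ideal p Rg"
  using fixed_ideal_Rg0_mult[of x "- 1"] Rg0_of_int[of "- 1"] by simp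

lemma ideal_fixed_ideal: "ideal (fixed_ideal p Rg) R0"
proof -
  interpret R0: cring R0 by (rule cring_R0)
  have minus: "\<ominus>\<^bsub>R0\<^esub> x = - x" if "x \<in> Rg 0" for x
    using R0.add.inv_equality[of "- x" x] Rg_uminus[OF p_pos that] that by (simp add: a_inv_def)
  show ?thesis
  proof (rule idealI[OF R0.ring_axioms])
    show "subgroup (fixed_ideal p Rg) (add_monoid R0)"
      by (rule R0.add.subgroupI)
        (use fixed_ideal_subset_Rg0 fixed_ideal_zero minus in
          \<open>auto simp: fixed_ideal_add fixed_ideal_uminus a_inv_def[symmetric]\<close>)
  next
    fix a x assume "a \<in> fixed_ideal p Rg" "x \<in> carrier R0"
    then show "x \<otimes>\<^bsub>R0\<^esub> a \<in> fixed_ideal p Rg" "a \<otimes>\<^bsub>R0\<^esub> x \<in> fixed_ideal p Rg"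
      using fixed_ideal_Rg0_mult by (auto simp: mult.commute)
  qed
qed

lemma Spec_Quot_fixed_ideal_eq_empty_iff: "Spec (R0 Quot fixed_ideal p Rg) = {} \<longleftrightarrow> fixed_ideal p Rg = Rg 0"
  using ideal.Spec_Quot_eq_empty_iff[OF ideal_fixed_ideal cring_R0] by simp

section \<open>The radical of \<open>R\<^sub>i\<^sup>p\<close>\<close>

definition rad_pow_span :: "nat \<Rightarrow> 'r set" where
  "rad_pow_span i = {z \<in> Rg 0. \<exists>N. z ^ N \<in> pow_span (Rg i) p}"

lemma rad_pow_span_zero: "0 \<in> rad_pow_span i"
  unfolding rad_pow_span_def pow_span_eq_int_span
  using Rg_zero[OF p_pos] int_span_zero by (auto intro!: exI[of _ 1])

lemma rad_pow_span_add:
  assumes i: "i < p" and z: "z \<in> rad_pow_span i" and w: "w \<in> rad_pow_span i"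
  shows "z + w \<in> rad_pow_span i"
proof -
  obtain N M where z0: "z \<in> Rg 0" and zN: "z ^ N \<in> pow_span (Rg i) p"
    and w0: "w \<in> Rg 0" and wM: "w ^ M \<in> pow_span (Rg i) p"
    using z w unfolding rad_pow_span_def by blast
  have "of_nat (N + M choose k) * z ^ k * w ^ (N + M - k) \<in> pow_span (Rg i) p" for k
  proof (cases "N \<le> k")
    case True
    then have "z ^ k = z ^ (k - N) * z ^ N"
      by (simp flip: power_add)
    then have "of_nat (N + M choose k) * z ^ k * w ^ (N + M - k)
                 = (of_nat (N + M choose k) * z ^ (k - N) * w ^ (N + M - k)) * z ^ N"
      by (simp add: mult_ac)
    then show ?thesis
      using pow_span_Rg0_mult[OF _ i zN] z0 w0 by (simp add: Rg0_mult_closed Rg0_of_nat Rg0_power)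
  next
    case False
    then have "w ^ (N + M - k) = w ^ (N + M - k - M) * w ^ M"
      by (simp flip: power_add)
    then have "of_nat (N + M choose k) * z ^ k * w ^ (N + M - k)
                 = (of_nat (N + M choose k) * z ^ k * w ^ (N + M - k - M)) * w ^ M"
      by (simp add: mult_ac)
    then show ?thesis
      using pow_span_Rg0_mult[OF _ i wM] z0 w0 by (simp add: Rg0_mult_closed Rg0_of_nat Rg0_power)
  qed
  then have "(z + w) ^ (N + M) \<in> pow_span (Rg i) p"
    unfolding binomial_ring pow_span_eq_int_span by (auto intro: int_span_sum)
  then show ?thesis
    using Rg_add[OF p_pos z0 w0] unfolding rad_pow_span_def by blast
qed

lemma rad_pow_span_Rg0_mult:
  assumes i: "i < p" and r: "r \<in> Rg 0" and z: "z \<in> rad_pow_span i"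
  shows "r * z \<in> rad_pow_span i"
proof -
  obtain N where "z \<in> Rg 0" "z ^ N \<in> pow_span (Rg i) p"
    using z unfolding rad_pow_span_def by blast
  then show ?thesis
    using pow_span_Rg0_mult[OF Rg0_power[OF r] i] Rg0_mult_closed[OF r]
    unfolding rad_pow_span_def by (auto simp: power_mult_distrib)
qed

text \<open>Since \<open>p\<close> is prime, \<open>s j \<equiv> i (mod p)\<close> is solvable, and then \<open>(a b)\<^sup>s\<^sup>p = (a\<^sup>s)\<^sup>p b\<^sup>s\<^sup>p\<close>
  with \<open>a\<^sup>s \<in> R\<^sub>i\<close> and \<open>b\<^sup>s\<^sup>p \<in> R\<^sub>0\<close>.\<close>
lemma mul_span_complement_subset_rad_pow_span:
  assumes i: "i \<in> {1..p-1}" and j: "j \<in> {1..p-1}"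
  shows "mul_span (Rg j) (Rg (p - j)) \<subseteq> rad_pow_span i"
  unfolding mul_span_eq_int_span
proof (rule int_span_subset)
  have ip: "i < p" and jp: "0 < j" "j < p" "p - j < p"
    using i j p_gt_1 by auto
  obtain s where s: "(s * j) mod p = i"
    using prime_ex_mult_mod_eq[OF prime jp(1,2), of i] ip by auto
  fix c x assume "x \<in> {a * b | a b. a \<in> Rg j \<and> b \<in> Rg (p - j)}"
  then obtain a b where x: "x = a * b" and a: "a \<in> Rg j" and b: "b \<in> Rg (p - j)"
    by blast
  have "(a ^ s) ^ p \<in> pow_span (Rg i) p"
    using Rg_power[OF jp(2) a, of s] s
    by (auto simp: pow_span_eq_int_span intro!: int_span_base exI[of _ "\<lambda>_. a ^ s"])
  moreover have "b ^ (s * p) \<in> Rg 0"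
    using Rg_power[OF jp(3) b, of "s * p"] by simp
  ultimately have "b ^ (s * p) * (a ^ s) ^ p \<in> pow_span (Rg i) p"
    by (rule pow_span_Rg0_mult[OF _ ip, rotated])
  moreover have "x ^ (s * p) = b ^ (s * p) * (a ^ s) ^ p"
    by (simp add: x power_mult_distrib mult.commute flip: power_mult)
  ultimately have "x ^ (s * p) \<in> pow_span (Rg i) p"
    by simp
  moreover have "x \<in> Rg 0"
    using mul_span_complement_subset_Rg0[OF j] mul_span_eq_int_span a b x by (blast intro: int_span_base)
  ultimately have "x \<in> rad_pow_span i"
    unfolding rad_pow_span_def by blast
  then show "of_int c * x \<in> rad_pow_span i"
    by (rule rad_pow_span_Rg0_mult[OF ip Rg0_of_int])
qed (use i p_gt_1 rad_pow_span_zero rad_pow_span_add in auto)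

lemma fixed_ideal_subset_rad_pow_span:
  assumes i: "i \<in> {1..p-1}"
  shows "fixed_ideal p Rg \<subseteq> rad_pow_span i"
proof
  fix y assume "y \<in> fixed_ideal p Rg"
  then obtain x where y: "y = (\<Sum>j\<in>{1..p-1}. x j)" and x: "\<And>j. j \<in> {1..p-1} \<Longrightarrow> x j \<in> mul_span (Rg j) (Rg (p - j))"
    by (blast elim: fixed_idealE)
  have "(\<Sum>j\<in>J. x j) \<in> rad_pow_span i" if "J \<subseteq> {1..p-1}" for J
    using that by (induction J rule: infinite_finite_induct)
      (use i p_gt_1 x mul_span_complement_subset_rad_pow_span[OF i] in \<open>auto simp: rad_pow_span_zero intro!: rad_pow_span_add\<close>)
  then show "y \<in> rad_pow_span i"
    using y by blast
qed

lemma pow_span_eq_Rg0_if_fixed_ideal_eq_Rg0: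
  assumes I: "fixed_ideal p Rg = Rg 0" and i: "i \<in> {1..p-1}"
  shows "pow_span (Rg i) p = Rg 0"
proof -
  have ip: "i < p"
    using i p_gt_1 by auto
  have "1 \<in> rad_pow_span i"
    using fixed_ideal_subset_rad_pow_span[OF i] I one_in_Rg0 by blast
  then have "1 \<in> pow_span (Rg i) p"
    unfolding rad_pow_span_def by auto
  then have "Rg 0 \<subseteq> pow_span (Rg i) p"
    using pow_span_Rg0_mult[OF _ ip] by fastforce
  then show ?thesis
    using pow_span_subset_Rg0[OF ip] by blast
qed

lemma mul_span_eq_Rg0_if_pow_span_Rg1_eq_Rg0:
  "pow_span (Rg 1) p = Rg 0 \<Longrightarrow> i \<in> {1..p-1} \<Longrightarrow> mul_span (Rg i) (Rg (p - i)) = Rg 0"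
  using pow_span_Rg1_subset_mul_span mul_span_complement_subset_Rg0 by blast

lemma fixed_ideal_eq_Rg0_if_mul_span_eq_Rg0:
  "i \<in> {1..p-1} \<Longrightarrow> mul_span (Rg i) (Rg (p - i)) = Rg 0 \<Longrightarrow> fixed_ideal p Rg = Rg 0"
  using mul_span_subset_fixed_ideal fixed_ideal_subset_Rg0 by blast

section \<open>Invertible components\<close>

lemma frag_mult_in_Rg:
  assumes "Poly_Mapping.keys x \<subseteq> Rg k \<times> Rg l" "k < p" "l < p"
  shows "frag_mult x \<in> Rg ((k + l) mod p)"
  using assms(1)
proof (induction x rule: frag_induction)
  case (one x)
  then show ?case using Rg_mult assms(2,3) by (cases x) auto
next
  case (diff a b)
  then show ?case using Rg_diff p_pos by (simp add: frag_eval_diff)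
qed (simp add: Rg_zero p_pos)

text \<open>\<open>(p - k) mod p\<close> is the degree \<open>-k\<close>; the \<open>mod\<close> matters for \<open>k = 0\<close>, as \<open>Rg p\<close> is unconstrained.\<close>
lemma unit_decomposition:
  assumes "\<forall>i\<in>{1..p-1}. mul_span (Rg i) (Rg (p - i)) = Rg 0" and k: "k < p"
  obtains n :: nat and u w :: "nat \<Rightarrow> 'r"
  where "\<And>t. t < n \<Longrightarrow> u t \<in> Rg k" "\<And>t. t < n \<Longrightarrow> w t \<in> Rg ((p - k) mod p)"
    "(\<Sum>t<n. u t * w t) = 1"
proof (cases "k = 0")
  case True
  then show thesis
    using that[of 1 "\<lambda>_. 1" "\<lambda>_. 1"] one_in_Rg0 by simp
next
  case False
  then have k1: "k \<in> {1..p-1}" and pk: "(p - k) mod p = p - k"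
    using k by auto
  then have "1 \<in> mul_span (Rg k) (Rg (p - k))"
    using assms(1) one_in_Rg0 by blast
  then obtain n c a b where one: "1 = (\<Sum>t<(n::nat). of_int (c t) * a t * b t)"
    and ab: "\<forall>t<n. a t \<in> Rg k \<and> b t \<in> Rg (p - k)"
    unfolding mul_span_def by blast
  have "(\<Sum>t<n. a t * (of_int (c t) * b t)) = 1"
    using one by (simp add: mult_ac)
  moreover have "of_int (c t) * b t \<in> Rg ((p - k) mod p)" if "t < n" for t
    using ab that Rg_of_int_mult[of "p - k"] pk k1 by auto
  ultimately show thesis
    using that[of n a "\<lambda>t. of_int (c t) * b t"] ab by blast
qed

end

locale invertible_component = zp_graded_algebra p phi Rg
    for p and phi :: "'f::field \<Rightarrow> 'r::comm_ring_1" and Rg +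
  fixes k l n :: nat and u w :: "nat \<Rightarrow> 'r"
  assumes k: "k < p" and l: "l < p"
    and u: "\<And>t. t < n \<Longrightarrow> u t \<in> Rg k" and w: "\<And>t. t < n \<Longrightarrow> w t \<in> Rg ((p - k) mod p)"
    and unit: "(\<Sum>t<n. u t * w t) = 1"
begin

definition tensor_section :: "'r \<Rightarrow> ('r \<times> 'r \<Rightarrow>\<^sub>0 int)" where
  "tensor_section z = (\<Sum>t<n. frag_of (u t, w t * z))"

abbreviation T :: "('r \<times> 'r \<Rightarrow>\<^sub>0 int) set" where
  "T \<equiv> tensor_rels (Rg 0) (Rg k) (Rg l)"

lemma w_mult_in_Rg:
  assumes "t < n" "z \<in> Rg ((k + l) mod p)"
  shows "w t * z \<in> Rg l"
proof -
  have "w t * z \<in> Rg (((p - k) mod p + (k + l) mod p) mod p)"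
    using assms w p_pos by (intro Rg_mult) auto
  then show ?thesis
    using k l by (simp add: mod_add_eq)
qed

lemma w_mult_in_Rg0:
  assumes "t < n" "a \<in> Rg k"
  shows "w t * a \<in> Rg 0"
proof -
  have "w t * a \<in> Rg (((p - k) mod p + k) mod p)"
    using assms w p_pos k by (intro Rg_mult) auto
  then show ?thesis
    using k by (simp add: mod_add_left_eq)
qed

lemma keys_tensor_section: "z \<in> Rg ((k + l) mod p) \<Longrightarrow> Poly_Mapping.keys (tensor_section z) \<subseteq> Rg k \<times> Rg l"
  unfolding tensor_section_def
  using keys_sum[of "\<lambda>t. frag_of (u t, w t * z)" "{..<n}"] u w_mult_in_Rg by (auto simp: keys_frag_of)

lemma frag_mult_tensor_section: "frag_mult (tensor_section z) = z"
proof -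
  have "frag_mult (tensor_section z) = (\<Sum>t<n. u t * w t) * z"
    by (simp add: tensor_section_def frag_eval_sum sum_distrib_right mult.assoc)
  then show ?thesis
    by (simp add: unit)
qed

lemma tensor_section_0: "tensor_section 0 \<in> T"
  unfolding tensor_section_def
  using u Rg_zero l by (auto intro!: tensor_rels_sum frag_of_zero_right_tensor_rels)

lemma tensor_section_add:
  assumes "z \<in> Rg ((k + l) mod p)" "z' \<in> Rg ((k + l) mod p)"
  shows "tensor_section (z + z') - tensor_section z - tensor_section z' \<in> T"
proof -
  have "tensor_section (z + z') - tensor_section z - tensor_section z'
          = (\<Sum>t<n. frag_of (u t, w t * z + w t * z') - frag_of (u t, w t * z) - frag_of (u t, w t * z'))"
    by (simp add: tensor_section_def sum_subtractf distrib_left)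
  also have "\<dots> \<in> T"
  proof (rule tensor_rels_sum)
    fix t assume "t \<in> {..<n}"
    then show "frag_of (u t, w t * z + w t * z') - frag_of (u t, w t * z) - frag_of (u t, w t * z') \<in> T"
      using assms u w_mult_in_Rg by (intro tensor_rels.lin2) auto
  qed
  finally show ?thesis .
qed

text \<open>Balancedness moves the scalar \<open>w\<^sub>t a \<in> R\<^sub>0\<close> across the tensor sign:
  \<open>a \<otimes> b = \<Sum>\<^sub>t u\<^sub>t w\<^sub>t a \<otimes> b = \<Sum>\<^sub>t u\<^sub>t \<otimes> w\<^sub>t a b\<close>.\<close>
lemma frag_of_minus_tensor_section:
  assumes a: "a \<in> Rg k" and b: "b \<in> Rg l"
  shows "frag_of (a, b) - tensor_section (a * b) \<in> T"
proof -
  have wa: "w t * a \<in> Rg 0" and wau: "(w t * a) * u t \<in> Rg k" if "t < n" for t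
    using w_mult_in_Rg0[OF that a] Rg0_mult[OF _ k u[OF that]] by auto
  have "a = (\<Sum>t<n. (w t * a) * u t)"
    by (simp add: unit mult_ac flip: sum_distrib_left)
  then have "frag_of (a, b) - (\<Sum>t<n. frag_of ((w t * a) * u t, b)) \<in> T"
    using frag_of_sum_left_tensor_rels[of "Rg k" n "\<lambda>t. (w t * a) * u t" b "Rg l" "Rg 0"]
      Rg_zero[OF k] Rg_add[OF k] wau b by metis
  moreover have "(\<Sum>t<n. frag_of ((w t * a) * u t, b)) - (\<Sum>t<n. frag_of (u t, (w t * a) * b)) \<in> T"
    using u b wa by (intro tensor_rels_sum_diff tensor_rels.bal) auto
  moreover have "(\<Sum>t<n. frag_of (u t, (w t * a) * b)) = tensor_section (a * b)"
    by (simp add: tensor_section_def mult_ac)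
  ultimately show ?thesis
    using tensor_rels_trans[of "frag_of (a, b)"] by simp
qed

lemma frag_minus_tensor_section:
  assumes "Poly_Mapping.keys y \<subseteq> Rg k \<times> Rg l"
  shows "y - tensor_section (frag_mult y) \<in> T"
proof -
  have "frag_mult y \<in> Rg ((k + l) mod p) \<and> y - tensor_section (frag_mult y) \<in> T"
    using assms
  proof (induction y rule: frag_induction)
    case zero
    then show ?case
      using tensor_rels.neg[OF tensor_section_0] Rg_zero p_pos by simp
  next
    case (one y)
    then show ?case
      using frag_of_minus_tensor_section Rg_mult[OF k l] by (cases y) auto
  next
    case (diff y1 y2)
    let ?f1 = "frag_mult y1" and ?f2 = "frag_mult y2"
    have "?f1 - ?f2 \<in> Rg ((k + l) mod p)"
      using diff Rg_diff p_pos by simp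
    then have "tensor_section ?f1 - tensor_section (?f1 - ?f2) - tensor_section ?f2 \<in> T"
      using tensor_section_add[of "?f1 - ?f2" ?f2] diff by simp
    moreover have "(y1 - tensor_section ?f1) - (y2 - tensor_section ?f2) \<in> T"
      using diff by (blast intro: tensor_rels_diff)
    ultimately have "(tensor_section ?f1 - tensor_section (?f1 - ?f2) - tensor_section ?f2)
                       + ((y1 - tensor_section ?f1) - (y2 - tensor_section ?f2)) \<in> T"
      by (rule tensor_rels.add)
    then show ?case
      using \<open>?f1 - ?f2 \<in> Rg ((k + l) mod p)\<close> by (simp add: frag_eval_diff algebra_simps)
  qed
  then show ?thesis ..
qed

lemma mult_map_iso_component: "mult_map_iso (Rg 0) (Rg k) (Rg l) (Rg ((k + l) mod p))"
  unfolding mult_map_iso_iff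
proof (intro conjI ballI iffI)
  show "frag_mult ` formal_sums (Rg k) (Rg l) = Rg ((k + l) mod p)"
  proof
    show "frag_mult ` formal_sums (Rg k) (Rg l) \<subseteq> Rg ((k + l) mod p)"
      using frag_mult_in_Rg[OF _ k l] unfolding formal_sums_def by blast
  next
    show "Rg ((k + l) mod p) \<subseteq> frag_mult ` formal_sums (Rg k) (Rg l)"
    proof
      fix z assume "z \<in> Rg ((k + l) mod p)"
      then have "tensor_section z \<in> formal_sums (Rg k) (Rg l)"
        using keys_tensor_section by (simp add: formal_sums_def)
      then show "z \<in> frag_mult ` formal_sums (Rg k) (Rg l)"
        using frag_mult_tensor_section[of z] by (metis image_eqI)
    qed
  qed
next
  fix x assume "x \<in> formal_sums (Rg k) (Rg l)" "frag_mult x = 0"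
  then have "x - tensor_section 0 \<in> T"
    using frag_minus_tensor_section[of x] by (simp add: formal_sums_def)
  from tensor_rels.add[OF this tensor_section_0] show "x \<in> T"
    by simp
qed (rule frag_mult_tensor_rels)

end

context zp_graded_algebra
begin

lemma mult_map_iso_if_mul_span_eq_Rg0:
  assumes "\<forall>i\<in>{1..p-1}. mul_span (Rg i) (Rg (p - i)) = Rg 0" "k < p" "l < p"
  shows "mult_map_iso (Rg 0) (Rg k) (Rg l) (Rg ((k + l) mod p))"
proof -
  obtain n :: nat and u w where "\<And>t. t < n \<Longrightarrow> u t \<in> Rg k" "\<And>t. t < n \<Longrightarrow> w t \<in> Rg ((p - k) mod p)"
    "(\<Sum>t<n. u t * w t) = 1"
    using unit_decomposition[OF assms(1,2)] by blast
  then interpret invertible_component p phi Rg k l n u w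
    by unfold_locales (use assms(2,3) prime F_algebra grading in auto)
  show ?thesis
    by (rule mult_map_iso_component)
qed

lemma mul_span_eq_Rg0_if_mult_map_iso:
  assumes "i \<in> {1..p-1}" "mult_map_iso (Rg 0) (Rg i) (Rg (p - i)) (Rg ((i + (p - i)) mod p))"
  shows "mul_span (Rg i) (Rg (p - i)) = Rg 0"
proof -
  have "(i + (p - i)) mod p = 0"
    using assms(1) p_gt_1 by auto
  then show ?thesis
    using mult_map_iso_subset_mul_span[OF assms(2)] mul_span_complement_subset_Rg0[OF assms(1)] by auto
qed

section \<open>The map \<open>\<Phi>\<close>\<close>

definition graded_mult :: "nat \<Rightarrow> 'r \<times> 'r \<Rightarrow> 'r" where
  "graded_mult k = (\<lambda>(a, b). hc a k * b)"

definition frag_proj :: "nat \<Rightarrow> nat \<Rightarrow> ('r \<times> 'r \<Rightarrow>\<^sub>0 int) \<Rightarrow> ('r \<times> 'r \<Rightarrow>\<^sub>0 int)" where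
  "frag_proj k l = frag_extend (\<lambda>(a, b). frag_of (hc a k, hc b l))"

lemma Phi_map_eq_frag_eval: "Phi_map p Rg x = (\<lambda>k. if k < p then frag_eval (graded_mult k) x else 0)"
  unfolding Phi_map_def frag_eval_def graded_mult_def by (auto intro!: sum.cong simp: mult.assoc)

lemma frag_eval_graded_mult_frag_of [simp]: "frag_eval (graded_mult k) (frag_of (a, b)) = hc a k * b"
  by (simp add: graded_mult_def)

lemma frag_proj_frag_of [simp]: "frag_proj k l (frag_of (a, b)) = frag_of (hc a k, hc b l)"
  by (simp add: frag_proj_def)

lemma keys_frag_proj: "k < p \<Longrightarrow> l < p \<Longrightarrow> Poly_Mapping.keys (frag_proj k l x) \<subseteq> Rg k \<times> Rg l"
  unfolding frag_proj_def
  using keys_frag_extend[of "\<lambda>(a, b). frag_of (hc a k, hc b l)" x] hcomp_in_Rg by fastforce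

lemma frag_proj_tensor_rels:
  assumes "x \<in> tensor_rels (Rg 0) UNIV UNIV" and k: "k < p" and l: "l < p"
  shows "frag_proj k l x \<in> tensor_rels (Rg 0) (Rg k) (Rg l)"
  unfolding frag_proj_def
proof (rule frag_extend_tensor_rels[OF assms(1)])
  fix a a' b :: 'r
  show "(case (a + a', b) of (a, b) \<Rightarrow> frag_of (hc a k, hc b l)) - (case (a, b) of (a, b) \<Rightarrow> frag_of (hc a k, hc b l))
          - (case (a', b) of (a, b) \<Rightarrow> frag_of (hc a k, hc b l)) \<in> tensor_rels (Rg 0) (Rg k) (Rg l)"
    using tensor_rels.lin1[of "hc a k" "Rg k" "hc a' k" "hc b l" "Rg l" "Rg 0"] hcomp_in_Rg k l
    by (simp add: hcomp_add)
next
  fix a b b' :: 'r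
  show "(case (a, b + b') of (a, b) \<Rightarrow> frag_of (hc a k, hc b l)) - (case (a, b) of (a, b) \<Rightarrow> frag_of (hc a k, hc b l))
          - (case (a, b') of (a, b) \<Rightarrow> frag_of (hc a k, hc b l)) \<in> tensor_rels (Rg 0) (Rg k) (Rg l)"
    using tensor_rels.lin2[of "hc a k" "Rg k" "hc b l" "Rg l" "hc b' l" "Rg 0"] hcomp_in_Rg k l
    by (simp add: hcomp_add)
next
  fix r a b :: 'r assume r: "r \<in> Rg 0"
  show "(case (r * a, b) of (a, b) \<Rightarrow> frag_of (hc a k, hc b l)) - (case (a, r * b) of (a, b) \<Rightarrow> frag_of (hc a k, hc b l))
          \<in> tensor_rels (Rg 0) (Rg k) (Rg l)"
    using tensor_rels.bal[OF r, of "hc a k" "Rg k" "hc b l" "Rg l"] hcomp_in_Rg k l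
    by (simp add: hcomp_Rg0_mult[OF r])
qed

lemma frag_proj_id:
  assumes "Poly_Mapping.keys x \<subseteq> Rg k \<times> Rg l" "k < p" "l < p"
  shows "frag_proj k l x = x"
  using assms(1)
proof (induction x rule: frag_induction)
  case (one y)
  then show ?case
    using hcomp_homog[OF assms(2)] hcomp_homog[OF assms(3)] by auto
qed (simp_all add: frag_proj_def frag_extend_diff)

lemma frag_mult_frag_proj:
  assumes "k < p" "l < p"
  shows "frag_mult (frag_proj k l x) = hc (frag_eval (graded_mult k) x) ((k + l) mod p)"
proof -
  have "Poly_Mapping.keys x \<subseteq> UNIV" by simp
  then show ?thesis
  proof (induction x rule: frag_induction)
    case (one y)
    obtain a b where y: "y = (a, b)" by (cases y)
    have "hc (hc a k * b) ((k + l) mod p) = hc a k * hc b (((k + l) mod p + p - k) mod p)"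
      using hcomp_homog_mult[OF assms(1) hcomp_in_Rg[OF assms(1)], of a b] p_pos by simp
    then show ?case
      using y mod_shifted_add_cancel[OF assms(1), of l] assms(2) by (simp add: add.commute graded_mult_def)
  qed (simp_all add: frag_proj_def frag_extend_diff frag_eval_diff hcomp_0 hcomp_diff)
qed

lemma frag_eval_graded_mult_homog:
  assumes "Poly_Mapping.keys x \<subseteq> Rg k \<times> Rg l" "k < p"
  shows "frag_eval (graded_mult k') x = (if k' = k then frag_mult x else 0)"
  using assms(1)
proof (induction x rule: frag_induction)
  case (one y)
  then show ?case
    using hcomp_homog[OF assms(2)] by (auto simp: graded_mult_def)
qed (simp_all add: frag_eval_diff)

lemma frag_eval_graded_mult_tensor_rels: "x \<in> tensor_rels (Rg 0) M N \<Longrightarrow> k < p \<Longrightarrow> frag_eval (graded_mult k) x = 0"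
  by (erule frag_eval_tensor_rels) (simp_all add: graded_mult_def hcomp_add hcomp_Rg0_mult algebra_simps)

lemma frag_minus_sum_frag_proj: "x - (\<Sum>k<p. \<Sum>l<p. frag_proj k l x) \<in> tensor_rels (Rg 0) UNIV UNIV"
proof -
  let ?T = "tensor_rels (Rg 0) (UNIV :: 'r set) UNIV"
  have "Poly_Mapping.keys x \<subseteq> UNIV" by simp
  then show ?thesis
  proof (induction x rule: frag_induction)
    case zero
    then show ?case by (simp add: frag_proj_def tensor_rels.zero)
  next
    case (one y)
    obtain a b where y: "y = (a, b)" by (cases y)
    have "frag_of (a, b) - (\<Sum>k<p. frag_of (hc a k, b)) \<in> ?T"
      using frag_of_sum_left_tensor_rels[of UNIV p "hc a" b UNIV "Rg 0"] sum_hcomp[of a] by simp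
    moreover have "(\<Sum>k<p. frag_of (hc a k, b)) - (\<Sum>k<p. \<Sum>l<p. frag_of (hc a k, hc b l)) \<in> ?T"
      using frag_of_sum_right_tensor_rels[of UNIV p "hc b" _ UNIV "Rg 0"] sum_hcomp[of b]
      by (intro tensor_rels_sum_diff) simp
    ultimately show ?case
      using tensor_rels_trans y by simp
  next
    case (diff y1 y2)
    have eq: "(y1 - y2) - (\<Sum>k<p. \<Sum>l<p. frag_proj k l (y1 - y2))
            = (y1 - (\<Sum>k<p. \<Sum>l<p. frag_proj k l y1)) - (y2 - (\<Sum>k<p. \<Sum>l<p. frag_proj k l y2))"
      by (simp add: frag_proj_def frag_extend_diff sum_subtractf algebra_simps)
    show ?case
      unfolding eq by (rule tensor_rels_diff[OF diff])
  qed
qed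

lemma Phi_iso_iff:
  "Phi_iso p Rg \<longleftrightarrow>
     (\<forall>f. (\<forall>k\<ge>p. f k = 0) \<longrightarrow> (\<exists>x. Phi_map p Rg x = f)) \<and>
     (\<forall>x. Phi_map p Rg x = (\<lambda>_. 0) \<longrightarrow> x \<in> tensor_rels (Rg 0) UNIV UNIV)"
proof -
  have range: "Phi_map p Rg x \<in> {f. \<forall>k\<ge>p. f k = 0}" for x
    by (simp add: Phi_map_eq_frag_eval)
  have surj: "Phi_map p Rg ` UNIV = {f. \<forall>k\<ge>p. f k = 0}
                \<longleftrightarrow> (\<forall>f. (\<forall>k\<ge>p. f k = 0) \<longrightarrow> (\<exists>x. Phi_map p Rg x = f))"
  proof
    assume "Phi_map p Rg ` UNIV = {f. \<forall>k\<ge>p. f k = 0}"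
    then show "\<forall>f. (\<forall>k\<ge>p. f k = 0) \<longrightarrow> (\<exists>x. Phi_map p Rg x = f)"
      by (simp add: set_eq_iff image_iff) (metis (no_types))
  next
    assume "\<forall>f. (\<forall>k\<ge>p. f k = 0) \<longrightarrow> (\<exists>x. Phi_map p Rg x = f)"
    then show "Phi_map p Rg ` UNIV = {f. \<forall>k\<ge>p. f k = 0}"
      using range by (auto simp: image_iff) metis
  qed
  have kernel: "(\<forall>x\<in>UNIV. Phi_map p Rg x = (\<lambda>_. 0) \<longleftrightarrow> x \<in> tensor_rels (Rg 0) UNIV UNIV)
                  \<longleftrightarrow> (\<forall>x. Phi_map p Rg x = (\<lambda>_. 0) \<longrightarrow> x \<in> tensor_rels (Rg 0) UNIV UNIV)"
    by (auto intro!: ext simp: Phi_map_eq_frag_eval frag_eval_graded_mult_tensor_rels)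
  have formal_sums_UNIV: "formal_sums UNIV UNIV = UNIV"
    by (simp add: formal_sums_def)
  show ?thesis
    unfolding Phi_iso_def formal_sums_UNIV surj kernel ..
qed

lemma frag_mult_onto_shifted:
  assumes "mult_map_iso (Rg 0) (Rg k) (Rg ((m + p - k) mod p)) (Rg ((k + (m + p - k) mod p) mod p))"
    and "k < p" "m < p" "z \<in> Rg m"
  shows "\<exists>X. Poly_Mapping.keys X \<subseteq> Rg k \<times> Rg ((m + p - k) mod p) \<and> frag_mult X = z"
proof -
  have "(k + (m + p - k) mod p) mod p = m"
    using mod_add_shifted_cancel[OF assms(2), of m] assms(3) by simp
  then have "z \<in> frag_mult ` formal_sums (Rg k) (Rg ((m + p - k) mod p))"
    using assms(1,4) unfolding mult_map_iso_iff by simp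
  then show ?thesis
    unfolding formal_sums_def by auto
qed

lemma Phi_map_onto_if_mult_map_iso:
  assumes iso: "\<forall>k<p. \<forall>l<p. mult_map_iso (Rg 0) (Rg k) (Rg l) (Rg ((k + l) mod p))"
    and f: "\<forall>k\<ge>p. f k = 0"
  shows "\<exists>x. Phi_map p Rg x = f"
proof -
  have "\<forall>k m. \<exists>X. k < p \<longrightarrow> m < p \<longrightarrow>
          Poly_Mapping.keys X \<subseteq> Rg k \<times> Rg ((m + p - k) mod p) \<and> frag_mult X = hc (f k) m"
    using frag_mult_onto_shifted iso hcomp_in_Rg p_pos by simp
  then obtain X where X: "\<And>k m. k < p \<Longrightarrow> m < p \<Longrightarrow>
          Poly_Mapping.keys (X k m) \<subseteq> Rg k \<times> Rg ((m + p - k) mod p) \<and> frag_mult (X k m) = hc (f k) m"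
    by metis
  have "frag_eval (graded_mult k') (\<Sum>k<p. \<Sum>m<p. X k m) = f k'" if "k' < p" for k'
  proof -
    have "frag_eval (graded_mult k') (X k m) = (if k' = k then hc (f k) m else 0)" if "k < p" "m < p" for k m
      using X[OF that] frag_eval_graded_mult_homog[of "X k m" k _ k'] that by auto
    then have "frag_eval (graded_mult k') (\<Sum>k<p. \<Sum>m<p. X k m) = (\<Sum>k<p. \<Sum>m<p. if k' = k then hc (f k) m else 0)"
      by (simp add: frag_eval_sum)
    also have "\<dots> = (\<Sum>m<p. hc (f k') m)"
      using that by (simp add: sum.swap[of _ "{..<p}" "{..<p}"] if_distrib sum.delta)
    finally show ?thesis
      by (simp add: sum_hcomp)
  qed
  then have "Phi_map p Rg (\<Sum>k<p. \<Sum>m<p. X k m) = f"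
    using f by (auto simp: Phi_map_eq_frag_eval)
  then show ?thesis ..
qed

lemma Phi_map_kernel_if_mult_map_iso:
  assumes iso: "\<forall>k<p. \<forall>l<p. mult_map_iso (Rg 0) (Rg k) (Rg l) (Rg ((k + l) mod p))"
    and x: "Phi_map p Rg x = (\<lambda>_. 0)"
  shows "x \<in> tensor_rels (Rg 0) UNIV UNIV"
proof -
  have "frag_proj k l x \<in> tensor_rels (Rg 0) UNIV UNIV" if k: "k < p" and l: "l < p" for k l
  proof -
    have "frag_eval (graded_mult k) x = 0"
      using fun_cong[OF x, of k] k by (simp add: Phi_map_eq_frag_eval)
    then have "frag_mult (frag_proj k l x) = 0"
      using frag_mult_frag_proj[OF k l] hcomp_0 by simp
    moreover have "frag_proj k l x \<in> formal_sums (Rg k) (Rg l)"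
      using keys_frag_proj[OF k l] by (simp add: formal_sums_def)
    ultimately have "frag_proj k l x \<in> tensor_rels (Rg 0) (Rg k) (Rg l)"
      using iso k l unfolding mult_map_iso_iff by blast
    then show ?thesis
      by (rule tensor_rels_mono) auto
  qed
  then have "(\<Sum>k<p. \<Sum>l<p. frag_proj k l x) \<in> tensor_rels (Rg 0) UNIV UNIV"
    by (auto intro!: tensor_rels_sum)
  from tensor_rels.add[OF frag_minus_sum_frag_proj[of x] this] show ?thesis
    by simp
qed

lemma mult_map_iso_if_Phi_iso:
  assumes Phi: "Phi_iso p Rg" and k: "k < p" and l: "l < p"
  shows "mult_map_iso (Rg 0) (Rg k) (Rg l) (Rg ((k + l) mod p))"
  unfolding mult_map_iso_iff
proof (intro conjI ballI iffI)
  show "frag_mult ` formal_sums (Rg k) (Rg l) = Rg ((k + l) mod p)"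
  proof
    show "frag_mult ` formal_sums (Rg k) (Rg l) \<subseteq> Rg ((k + l) mod p)"
      using frag_mult_in_Rg[OF _ k l] by (auto simp: formal_sums_def)
  next
    show "Rg ((k + l) mod p) \<subseteq> frag_mult ` formal_sums (Rg k) (Rg l)"
    proof
      fix z assume z: "z \<in> Rg ((k + l) mod p)"
      obtain x where "Phi_map p Rg x = (\<lambda>k'. if k' = k then z else 0)"
        using Phi k unfolding Phi_iso_iff by force
      then have "frag_eval (graded_mult k) x = z"
        using fun_cong[of _ _ k] k by (fastforce simp: Phi_map_eq_frag_eval)
      then have "frag_mult (frag_proj k l x) = z"
        using frag_mult_frag_proj[OF k l] hcomp_homog[OF _ z] p_pos by simp
      moreover have "frag_proj k l x \<in> formal_sums (Rg k) (Rg l)"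
        using keys_frag_proj[OF k l] by (simp add: formal_sums_def)
      ultimately show "z \<in> frag_mult ` formal_sums (Rg k) (Rg l)"
        by force
    qed
  qed
next
  fix x assume x: "x \<in> formal_sums (Rg k) (Rg l)" and "frag_mult x = 0"
  then have "Phi_map p Rg x = (\<lambda>_. 0)"
    using frag_eval_graded_mult_homog[OF _ k] by (auto simp: Phi_map_eq_frag_eval formal_sums_def)
  then have "x \<in> tensor_rels (Rg 0) UNIV UNIV"
    using Phi unfolding Phi_iso_iff by blast
  then have "frag_proj k l x \<in> tensor_rels (Rg 0) (Rg k) (Rg l)"
    using frag_proj_tensor_rels k l by blast
  then show "x \<in> tensor_rels (Rg 0) (Rg k) (Rg l)"
    using frag_proj_id[OF _ k l] x by (simp add: formal_sums_def)
qed (rule frag_mult_tensor_rels)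

lemma all_mult_map_iso_iff_Phi_iso:
  "(\<forall>k<p. \<forall>l<p. mult_map_iso (Rg 0) (Rg k) (Rg l) (Rg ((k + l) mod p))) \<longleftrightarrow> Phi_iso p Rg"
proof
  assume iso: "\<forall>k<p. \<forall>l<p. mult_map_iso (Rg 0) (Rg k) (Rg l) (Rg ((k + l) mod p))"
  show "Phi_iso p Rg"
    unfolding Phi_iso_iff
    using Phi_map_onto_if_mult_map_iso[OF iso] Phi_map_kernel_if_mult_map_iso[OF iso] by blast
qed (use mult_map_iso_if_Phi_iso in blast)

lemma all_mul_span_eq_Rg0_iff_all_mult_map_iso:
  "(\<forall>i\<in>{1..p-1}. mul_span (Rg i) (Rg (p - i)) = Rg 0) \<longleftrightarrow>
     (\<forall>k<p. \<forall>l<p. mult_map_iso (Rg 0) (Rg k) (Rg l) (Rg ((k + l) mod p)))"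
proof
  assume iso: "\<forall>k<p. \<forall>l<p. mult_map_iso (Rg 0) (Rg k) (Rg l) (Rg ((k + l) mod p))"
  show "\<forall>i\<in>{1..p-1}. mul_span (Rg i) (Rg (p - i)) = Rg 0"
  proof
    fix i assume i: "i \<in> {1..p-1}"
    then have "i < p" "p - i < p"
      using p_gt_1 by auto
    with iso show "mul_span (Rg i) (Rg (p - i)) = Rg 0"
      using mul_span_eq_Rg0_if_mult_map_iso[OF i] by blast
  qed
qed (use mult_map_iso_if_mul_span_eq_Rg0 in blast)

end

theorem proposition3p2:
  fixes p :: nat and phi :: "'f::field \<Rightarrow> 'r::comm_ring_1" and Rg :: "nat \<Rightarrow> 'r set"
  assumes "prime p"
    and "F_algebra phi"
    and "zp_grading p phi Rg"
  defines "I \<equiv> fixed_ideal p Rg"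
  shows "(Spec (sub_ring (Rg 0) Quot I) = {} \<longleftrightarrow> I = Rg 0)
       \<and> (I = Rg 0 \<longleftrightarrow> (\<forall>i\<in>{1..p-1}. pow_span (Rg i) p = Rg 0))
       \<and> ((\<forall>i\<in>{1..p-1}. pow_span (Rg i) p = Rg 0) \<longleftrightarrow> pow_span (Rg 1) p = Rg 0)
       \<and> (pow_span (Rg 1) p = Rg 0 \<longleftrightarrow> (\<forall>i\<in>{1..p-1}. mul_span (Rg i) (Rg (p - i)) = Rg 0))
       \<and> ((\<forall>i\<in>{1..p-1}. mul_span (Rg i) (Rg (p - i)) = Rg 0) \<longleftrightarrow>
            (\<forall>k<p. \<forall>l<p. mult_map_iso (Rg 0) (Rg k) (Rg l) (Rg ((k + l) mod p))))
       \<and> ((\<forall>k<p. \<forall>l<p. mult_map_iso (Rg 0) (Rg k) (Rg l) (Rg ((k + l) mod p))) \<longleftrightarrow> Phi_iso p Rg)"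
proof -
  interpret zp_graded_algebra p phi Rg
    using assms(1-3) by unfold_locales
  have one: "1 \<in> {1..p-1}"
    using p_gt_1 by simp
  have B_imp_C: "fixed_ideal p Rg = Rg 0 \<Longrightarrow> \<forall>i\<in>{1..p-1}. pow_span (Rg i) p = Rg 0"
    using pow_span_eq_Rg0_if_fixed_ideal_eq_Rg0 by blast
  have D_imp_E: "pow_span (Rg 1) p = Rg 0 \<Longrightarrow> \<forall>i\<in>{1..p-1}. mul_span (Rg i) (Rg (p - i)) = Rg 0"
    using mul_span_eq_Rg0_if_pow_span_Rg1_eq_Rg0 by blast
  have E_imp_B: "\<forall>i\<in>{1..p-1}. mul_span (Rg i) (Rg (p - i)) = Rg 0 \<Longrightarrow> fixed_ideal p Rg = Rg 0"
    using fixed_ideal_eq_Rg0_if_mul_span_eq_Rg0 one by blast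
  show ?thesis
    unfolding I_def
    using Spec_Quot_fixed_ideal_eq_empty_iff B_imp_C one D_imp_E E_imp_B
      all_mul_span_eq_Rg0_iff_all_mult_map_iso all_mult_map_iso_iff_Phi_iso
    by blast
qed

end
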